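(* Let $n\geq 2$ and let $L'_n$ be the graph of the $\alpha,\omega$-dicyclobutadieno derivative of $[n-1]$-phenylene (defined in the context). Then the base polynomial counting distances between pairs of degree-3 vertices of $L'_n$ is \begin{eqnarray*} H^{3,3}_{b}(L'_{n}) &=& 2(2n-3)x+2\sum_{k=2}^{n-1}(3n-3k-1)x^{3k-2}+2\sum_{k=1}^{n-1}(2n-2k-1)x^{3k-1}\\&&+2\sum_{k=1}^{n-1}(3n-3k-2)x^{3k}. \end{eqnarray*}
   Context: All graphs are finite, simple and connected; $d(u,v)$ denotes the shortest-path distance and $d_u$ the degree of a vertex $u$. For a graph $G$ and a degree $p$, the base polynomial is $H^{p,p}_{b}(G)=\sum x^{d(u,v)}$, where the sum runs over all unordered pairs $\{u,v\}$ of distinct vertices of $G$ both of degree $p$. Construction of $L'_n$ ($n\ge 2$): take $n-1$ hexagons $H_1,\dots,H_{n-1}$, hexagon $H_i$ being the 6-cycle $a_i b_i c_i d_i e_i f_i a_i$, and for $i=1,\dots,n-2$ add edges $b_i f_{i+1}$ and $c_i e_{i+1}$ (so consecutive hexagons are joined by the 4-cycle $b_i c_i e_{i+1} f_{i+1}$). Then add four new vertices $p,q,r,s$ with edges $pq$, $pf_1$, $qe_1$ (forming the 4-cycle $f_1 e_1 q p$) and $rs$, $rb_{n-1}$, $sc_{n-1}$ (forming the 4-cycle $b_{n-1} c_{n-1} s r$). Thus $L'_n$ has $n-1$ hexagons and $n$ squares, $2n+2$ vertices of degree 2 and $4n-4$ vertices of degree 3. *)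

theory Defs
  imports "HOL-Computational_Algebra.Polynomial"
begin

definition degree_in :: "'a set \<Rightarrow> ('a \<Rightarrow> 'a \<Rightarrow> bool) \<Rightarrow> 'a \<Rightarrow> nat" where
  "degree_in V E u = card {v \<in> V. E u v}"

fun walk_in :: "'a set \<Rightarrow> ('a \<Rightarrow> 'a \<Rightarrow> bool) \<Rightarrow> nat \<Rightarrow> 'a \<Rightarrow> 'a \<Rightarrow> bool" where
  "walk_in V E 0 u v = (u \<in> V \<and> u = v)"
| "walk_in V E (Suc k) u v = (u \<in> V \<and> (\<exists>w\<in>V. E u w \<and> walk_in V E k w v))"

definition gdist :: "'a set \<Rightarrow> ('a \<Rightarrow> 'a \<Rightarrow> bool) \<Rightarrow> 'a \<Rightarrow> 'a \<Rightarrow> nat" where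
  "gdist V E u v = (LEAST k. walk_in V E k u v)"

definition base_poly :: "'a set \<Rightarrow> ('a \<Rightarrow> 'a \<Rightarrow> bool) \<Rightarrow> nat \<Rightarrow> int poly" where
  "base_poly V E p =
     (\<Sum>e \<in> {{u, v} | u v. u \<in> V \<and> v \<in> V \<and> u \<noteq> v \<and>
                           degree_in V E u = p \<and> degree_in V E v = p}.
        monom 1 (LEAST k. \<exists>u v. e = {u, v} \<and> walk_in V E k u v))"

datatype lvert = Av nat | Bv nat | Cv nat | Dv nat | Ev nat | Fv nat | Pv | Qv | Rv | Sv

definition L_verts :: "nat \<Rightarrow> lvert set" where
  "L_verts n = (\<Union>i\<in>{1..n-1}. {Av i, Bv i, Cv i, Dv i, Ev i, Fv i}) \<union> {Pv, Qv, Rv, Sv}"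

definition L_edge_pairs :: "nat \<Rightarrow> (lvert \<times> lvert) set" where
  "L_edge_pairs n =
     (\<Union>i\<in>{1..n-1}. {(Av i, Bv i), (Bv i, Cv i), (Cv i, Dv i), (Dv i, Ev i),
                      (Ev i, Fv i), (Fv i, Av i)})
   \<union> (\<Union>i\<in>{1..n-2}. {(Bv i, Fv (Suc i)), (Cv i, Ev (Suc i))})
   \<union> {(Pv, Qv), (Pv, Fv 1), (Qv, Ev 1), (Rv, Sv), (Rv, Bv (n-1)), (Sv, Cv (n-1))}"

definition L_adj :: "nat \<Rightarrow> lvert \<Rightarrow> lvert \<Rightarrow> bool" where
  "L_adj n u v = ((u, v) \<in> L_edge_pairs n \<or> (v, u) \<in> L_edge_pairs n)"

end

theory Submission
  imports Defs
begin

(* L'_n is a ladder: its vertices lie in two rows, P, F_i, A_i, B_i, R on top and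
   Q, E_i, D_i, C_i, S below, at consecutive columns, and every edge joins column neighbours
   within a row or is a rung joining the two rows in one column.  Hence
   |col u - col v| + [u, v in different rows] bounds d(u, v) from below, with equality as soon
   as u carries a rung itself; the vertices carrying rungs inside the hexagons are exactly the
   degree-3 vertices B_i, C_i, E_i, F_i.  So the pairs inside one hexagon contribute
   2x + 2x^2 + 2x^3, the pairs in two hexagons k apart a polynomial depending only on k,
   and the closed form follows by induction on the number n - 1 of hexagons. *)

lemma walk_in_append:
  "walk_in V E a u w \<Longrightarrow> walk_in V E b w v \<Longrightarrow> walk_in V E (a + b) u v"
  by (induction a arbitrary: u) auto

lemma walk_in_rev:
  assumes sym: "\<And>x y. E x y \<Longrightarrow> E y x"
  shows "walk_in V E k u v \<Longrightarrow> walk_in V E k v u"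
proof (induction k arbitrary: u)
  case (Suc k)
  then obtain w where "u \<in> V" "w \<in> V" "E u w" "walk_in V E k w v" by auto
  with Suc.IH sym have "walk_in V E k v w" "walk_in V E 1 w u" by auto
  then show ?case using walk_in_append[of V E k v w 1 u] by simp
qed simp

lemma walk_in_length_lower_bound:
  fixes f :: "'a \<Rightarrow> int"
  assumes "\<And>x y. E x y \<Longrightarrow> f x \<le> f y + 1"
  shows "walk_in V E k u v \<Longrightarrow> f u \<le> f v + int k"
proof (induction k arbitrary: u)
  case (Suc k)
  then obtain w where "E u w" "walk_in V E k w v" by auto
  with Suc.IH assms[of u w] show ?case by fastforce
qed simp

lemma gdist_eqI:
  "walk_in V E d u v \<Longrightarrow> (\<And>k. walk_in V E k u v \<Longrightarrow> d \<le> k) \<Longrightarrow> gdist V E u v = d"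
  unfolding gdist_def by (rule Least_equality)

lemma Least_pair_walk_eq_gdist:
  assumes "\<And>x y. E x y \<Longrightarrow> E y x"
  shows "(LEAST k. \<exists>a b. {u, v} = {a, b} \<and> walk_in V E k a b) = gdist V E u v"
proof -
  have "(\<exists>a b. {u, v} = {a, b} \<and> walk_in V E k a b) \<longleftrightarrow> walk_in V E k u v" for k
    using walk_in_rev[OF assms] by (auto simp: doubleton_eq_iff)
  then show ?thesis unfolding gdist_def by simp
qed

lemma sum_offdiag_Un:
  fixes f :: "'a \<Rightarrow> 'a \<Rightarrow> 'b::comm_ring_1"
  assumes "finite A" "finite B" "A \<inter> B = {}" "\<And>x y. f x y = f y x"
  shows "(\<Sum>u\<in>A \<union> B. \<Sum>v\<in>(A \<union> B) - {u}. f u v)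
       = (\<Sum>u\<in>A. \<Sum>v\<in>A - {u}. f u v) + 2 * (\<Sum>u\<in>A. \<Sum>v\<in>B. f u v) + (\<Sum>u\<in>B. \<Sum>v\<in>B - {u}. f u v)"
proof -
  have offdiag: "(\<Sum>u\<in>S. \<Sum>v\<in>S - {u}. f u v) = (\<Sum>u\<in>S. \<Sum>v\<in>S. f u v) - (\<Sum>u\<in>S. f u u)"
    if "finite S" for S
    using that by (simp add: sum_diff1 sum_subtractf)
  have swap: "(\<Sum>u\<in>B. \<Sum>v\<in>A. f u v) = (\<Sum>u\<in>A. \<Sum>v\<in>B. f u v)"
    by (subst sum.swap) (simp add: assms(4))
  show ?thesis
    using assms(1-3)
    unfolding offdiag[OF assms(1)] offdiag[OF assms(2)] offdiag[OF finite_UnI[OF assms(1,2)]]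
    by (simp add: sum.union_disjoint sum.distrib swap)
qed

lemma base_poly_eq_half_offdiag_sum:
  fixes V :: "'a set" and p :: nat
  assumes fin: "finite V" and sym: "\<And>x y. E x y \<Longrightarrow> E y x"
  defines "D \<equiv> {u \<in> V. degree_in V E u = p}"
  shows "2 * base_poly V E p = (\<Sum>u\<in>D. \<Sum>v\<in>D - {u}. monom 1 (gdist V E u v))"
proof -
  define S where "S = Sigma D (\<lambda>u. D - {u})"
  define pair where "pair = (\<lambda>(u::'a, v::'a). {u, v})"
  define g where "g = (\<lambda>e. monom (1::int) (LEAST k. \<exists>u v. e = {u, v} \<and> walk_in V E k u v))"
  have finD: "finite D" unfolding D_def using fin by simp
  then have finS: "finite S" unfolding S_def by auto
  have "{{u, v} | u v. u \<in> V \<and> v \<in> V \<and> u \<noteq> v \<and> degree_in V E u = p \<and> degree_in V E v = p}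
      = pair ` S"
    unfolding S_def pair_def D_def by (auto simp: image_def)
  then have base_poly_pairs: "base_poly V E p = sum g (pair ` S)"
    unfolding base_poly_def g_def by simp
  have "sum (g \<circ> pair) S = (\<Sum>e\<in>pair ` S. sum (g \<circ> pair) {x \<in> S. pair x = e})"
    by (rule sum.image_gen[OF finS])
  also have "\<dots> = (\<Sum>e\<in>pair ` S. 2 * g e)"
  proof (rule sum.cong[OF refl])
    fix e assume "e \<in> pair ` S"
    then obtain u v where uv: "u \<noteq> v" "e = {u, v}" "(u, v) \<in> S" unfolding S_def pair_def by auto
    then have "{x \<in> S. pair x = e} = {(u, v), (v, u)}"
      unfolding S_def pair_def by (auto simp: doubleton_eq_iff)
    then show "sum (g \<circ> pair) {x \<in> S. pair x = e} = 2 * g e"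
      using uv unfolding pair_def by (simp add: insert_commute)
  qed
  finally have "2 * base_poly V E p = sum (g \<circ> pair) S"
    using base_poly_pairs by (simp add: sum_distrib_left)
  also have "\<dots> = (\<Sum>(u, v)\<in>S. monom 1 (gdist V E u v))"
    unfolding g_def pair_def using Least_pair_walk_eq_gdist[of E, OF sym]
    by (intro sum.cong) auto
  also have "\<dots> = (\<Sum>u\<in>D. \<Sum>v\<in>D - {u}. monom 1 (gdist V E u v))"
    unfolding S_def using finD by (subst sum.Sigma) auto
  finally show ?thesis .
qed

section \<open>The graph L'_n as a ladder\<close>

fun upper :: "lvert \<Rightarrow> bool" where
  "upper (Av i) = True" | "upper (Bv i) = True" | "upper (Fv i) = True"
| "upper Pv = True" | "upper Rv = True"
| "upper (Cv i) = False" | "upper (Dv i) = False" | "upper (Ev i) = False"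
| "upper Qv = False" | "upper Sv = False"

fun column :: "nat \<Rightarrow> lvert \<Rightarrow> int" where
  "column n (Av i) = 3 * int i - 2" | "column n (Dv i) = 3 * int i - 2"
| "column n (Bv i) = 3 * int i - 1" | "column n (Cv i) = 3 * int i - 1"
| "column n (Ev i) = 3 * int i - 3" | "column n (Fv i) = 3 * int i - 3"
| "column n Pv = -1" | "column n Qv = -1"
| "column n Rv = 3 * int n - 3" | "column n Sv = 3 * int n - 3"

definition ladder_dist :: "nat \<Rightarrow> lvert \<Rightarrow> lvert \<Rightarrow> int" where
  "ladder_dist n u v = \<bar>column n u - column n v\<bar> + (if upper u = upper v then 0 else 1)"

lemma ladder_dist_commute: "ladder_dist n u v = ladder_dist n v u"
  unfolding ladder_dist_def by auto

lemma ladder_dist_triangle: "ladder_dist n u v \<le> ladder_dist n u w + ladder_dist n w v"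
  unfolding ladder_dist_def by auto

lemma mem_L_verts [simp]:
  "Av i \<in> L_verts n \<longleftrightarrow> 1 \<le> i \<and> i \<le> n - 1"
  "Bv i \<in> L_verts n \<longleftrightarrow> 1 \<le> i \<and> i \<le> n - 1"
  "Cv i \<in> L_verts n \<longleftrightarrow> 1 \<le> i \<and> i \<le> n - 1"
  "Dv i \<in> L_verts n \<longleftrightarrow> 1 \<le> i \<and> i \<le> n - 1"
  "Ev i \<in> L_verts n \<longleftrightarrow> 1 \<le> i \<and> i \<le> n - 1"
  "Fv i \<in> L_verts n \<longleftrightarrow> 1 \<le> i \<and> i \<le> n - 1"
  "Pv \<in> L_verts n" "Qv \<in> L_verts n" "Rv \<in> L_verts n" "Sv \<in> L_verts n"
  unfolding L_verts_def by auto

lemma finite_L_verts: "finite (L_verts n)"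
  unfolding L_verts_def by auto

lemma L_adj_commute: "L_adj n u v \<Longrightarrow> L_adj n v u"
  unfolding L_adj_def by auto

lemma ladder_dist_L_adj: "n \<ge> 2 \<Longrightarrow> L_adj n u v \<Longrightarrow> ladder_dist n u v = 1"
  unfolding L_adj_def L_edge_pairs_def ladder_dist_def by (auto simp: of_nat_diff)

lemma ladder_dist_le_walk:
  assumes "n \<ge> 2" "walk_in V (L_adj n) k u v"
  shows "ladder_dist n u v \<le> int k"
proof -
  have "ladder_dist n x v \<le> ladder_dist n y v + 1" if "L_adj n x y" for x y
    using ladder_dist_triangle[of n x v y] ladder_dist_L_adj[OF assms(1) that] by simp
  then show ?thesis
    using walk_in_length_lower_bound[OF _ assms(2), of "\<lambda>x. ladder_dist n x v"]
    by (simp add: ladder_dist_def)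
qed

lemma column_le: "n \<ge> 2 \<Longrightarrow> u \<in> L_verts n \<Longrightarrow> column n u \<le> 3 * int n - 3"
  by (cases u) auto

lemma L_verts_eqI:
  assumes "n \<ge> 2" "u \<in> L_verts n" "v \<in> L_verts n" "column n u = column n v" "upper u = upper v"
  shows "u = v"
  using assms by (cases u; cases v) (auto simp: of_nat_diff, presburger+)

lemma L_step_right:
  assumes "n \<ge> 2" "u \<in> L_verts n" "column n u < 3 * int n - 3"
  obtains w where "w \<in> L_verts n" "upper w = upper u" "column n w = column n u + 1" "L_adj n u w"
proof -
  have "\<exists>w \<in> L_verts n. upper w = upper u \<and> column n w = column n u + 1 \<and> L_adj n u w"
  proof (cases u)
    case (Bv i)
    show ?thesis
    proof (cases "i < n - 1")
      case True
      then show ?thesis using assms Bv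
        by (intro bexI[of _ "Fv (Suc i)"]) (auto simp: L_adj_def L_edge_pairs_def)
    next
      case False
      then show ?thesis using assms Bv
        by (intro bexI[of _ Rv]) (auto simp: L_adj_def L_edge_pairs_def of_nat_diff)
    qed
  next
    case (Cv i)
    show ?thesis
    proof (cases "i < n - 1")
      case True
      then show ?thesis using assms Cv
        by (intro bexI[of _ "Ev (Suc i)"]) (auto simp: L_adj_def L_edge_pairs_def)
    next
      case False
      then show ?thesis using assms Cv
        by (intro bexI[of _ Sv]) (auto simp: L_adj_def L_edge_pairs_def of_nat_diff)
    qed
  qed (use assms in \<open>force simp: L_adj_def L_edge_pairs_def\<close>)+
  then show ?thesis using that by blast
qed

lemma L_walk_in_row:
  assumes n: "n \<ge> 2" and uv: "u \<in> L_verts n" "v \<in> L_verts n" "upper u = upper v"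
  shows "walk_in (L_verts n) (L_adj n) (nat \<bar>column n u - column n v\<bar>) u v"
proof -
  have rightward: "walk_in (L_verts n) (L_adj n) d x y"
    if "x \<in> L_verts n" "y \<in> L_verts n" "upper x = upper y" "column n y - column n x = int d" for d x y
    using that
  proof (induction d arbitrary: x)
    case 0
    then show ?case using L_verts_eqI[OF n, of x y] by simp
  next
    case (Suc d)
    have "column n x < 3 * int n - 3" using column_le[OF n Suc.prems(2)] Suc.prems(4) by simp
    then obtain w where w: "w \<in> L_verts n" "upper w = upper x" "column n w = column n x + 1" "L_adj n x w"
      using L_step_right[OF n Suc.prems(1)] by blast
    with Suc show ?case by auto
  qed
  show ?thesis
  proof (cases "column n u \<le> column n v")
    case True
    then show ?thesis using rightward[OF uv] by simp
  next
    case False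
    then have "walk_in (L_verts n) (L_adj n) (nat \<bar>column n u - column n v\<bar>) v u"
      using rightward[OF uv(2,1) uv(3)[symmetric]] by simp
    then show ?thesis using walk_in_rev[of "L_adj n", OF L_adj_commute] by blast
  qed
qed

definition hex_deg3 :: "nat \<Rightarrow> lvert set" where
  "hex_deg3 i = {Bv i, Cv i, Ev i, Fv i}"

definition deg3_verts :: "nat \<Rightarrow> lvert set" where
  "deg3_verts m = (\<Union>i\<in>{1..m}. hex_deg3 i)"

lemma deg3_verts_subset: "deg3_verts (n - 1) \<subseteq> L_verts n"
  unfolding deg3_verts_def hex_deg3_def by auto

lemma L_neighbours_hex:
  assumes "n \<ge> 2" "1 \<le> i" "i \<le> n - 1"
  shows "{v \<in> L_verts n. L_adj n (Av i) v} = {Bv i, Fv i}"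
    and "{v \<in> L_verts n. L_adj n (Dv i) v} = {Cv i, Ev i}"
    and "{v \<in> L_verts n. L_adj n (Bv i) v} = {Av i, Cv i, if i < n - 1 then Fv (Suc i) else Rv}"
    and "{v \<in> L_verts n. L_adj n (Cv i) v} = {Bv i, Dv i, if i < n - 1 then Ev (Suc i) else Sv}"
    and "{v \<in> L_verts n. L_adj n (Ev i) v} = {Dv i, Fv i, if i = 1 then Qv else Cv (i - 1)}"
    and "{v \<in> L_verts n. L_adj n (Fv i) v} = {Av i, Ev i, if i = 1 then Pv else Bv (i - 1)}"
  using assms by (auto simp: L_adj_def L_edge_pairs_def)

lemma L_neighbours_end:
  assumes "n \<ge> 2"
  shows "{v \<in> L_verts n. L_adj n Pv v} = {Qv, Fv 1}"
    and "{v \<in> L_verts n. L_adj n Qv v} = {Pv, Ev 1}"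
    and "{v \<in> L_verts n. L_adj n Rv v} = {Sv, Bv (n - 1)}"
    and "{v \<in> L_verts n. L_adj n Sv v} = {Rv, Cv (n - 1)}"
  using assms by (auto simp: L_adj_def L_edge_pairs_def)

lemma L_deg3_verts:
  assumes "n \<ge> 2"
  shows "{u \<in> L_verts n. degree_in (L_verts n) (L_adj n) u = 3} = deg3_verts (n - 1)"
proof -
  have "degree_in (L_verts n) (L_adj n) u = (if u \<in> deg3_verts (n - 1) then 3 else 2)"
    if "u \<in> L_verts n" for u
    using that assms
    by (cases u) (auto simp: degree_in_def L_neighbours_hex L_neighbours_end deg3_verts_def hex_deg3_def)
  then show ?thesis using deg3_verts_subset[of n] by (auto split: if_splits)
qed

lemma L_rung:
  assumes "u \<in> deg3_verts (n - 1)"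
  obtains w where "w \<in> L_verts n" "upper w \<noteq> upper u" "column n w = column n u" "L_adj n u w"
proof -
  obtain i where i: "1 \<le> i" "i \<le> n - 1" "u \<in> {Bv i, Cv i, Ev i, Fv i}"
    using assms unfolding deg3_verts_def hex_deg3_def by auto
  then have "\<exists>w \<in> L_verts n. upper w \<noteq> upper u \<and> column n w = column n u \<and> L_adj n u w"
    by (elim insertE) (force simp: L_adj_def L_edge_pairs_def)+
  then show ?thesis using that by blast
qed

lemma gdist_L_deg3:
  assumes n: "n \<ge> 2" and u: "u \<in> deg3_verts (n - 1)" and v: "v \<in> L_verts n"
  shows "gdist (L_verts n) (L_adj n) u v = nat (ladder_dist n u v)"
proof (rule gdist_eqI)
  show "nat (ladder_dist n u v) \<le> k" if "walk_in (L_verts n) (L_adj n) k u v" for k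
    using ladder_dist_le_walk[OF n that] by simp
  have uV: "u \<in> L_verts n" using u deg3_verts_subset by auto
  show "walk_in (L_verts n) (L_adj n) (nat (ladder_dist n u v)) u v"
  proof (cases "upper u = upper v")
    case True
    then show ?thesis using L_walk_in_row[OF n uV v] by (simp add: ladder_dist_def)
  next
    case False
    obtain w where w: "w \<in> L_verts n" "upper w \<noteq> upper u" "column n w = column n u" "L_adj n u w"
      using L_rung[OF u] .
    then have "walk_in (L_verts n) (L_adj n) (Suc (nat \<bar>column n w - column n v\<bar>)) u v"
      using L_walk_in_row[OF n w(1) v] False uV by auto
    moreover have "nat (ladder_dist n u v) = Suc (nat \<bar>column n w - column n v\<bar>)"
      using False w by (simp add: ladder_dist_def)
    ultimately show ?thesis by simp
  qed
qed

definition hex_inner_poly :: "int poly" where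
  "hex_inner_poly = monom 2 1 + monom 2 2 + monom 2 3"

definition hex_pair_poly :: "nat \<Rightarrow> int poly" where
  "hex_pair_poly k = monom 2 (3*k - 2) + monom 2 (3*k - 1) + monom 4 (3*k)
                   + monom 4 (3*k + 1) + monom 2 (3*k + 2) + monom 2 (3*k + 3)"

definition deg3_dist_sum :: "nat \<Rightarrow> nat \<Rightarrow> int poly" where
  "deg3_dist_sum n m =
     (\<Sum>u\<in>deg3_verts m. \<Sum>v\<in>deg3_verts m - {u}. monom 1 (nat (ladder_dist n u v)))"

lemma hex_offdiag_sum:
  "(\<Sum>u\<in>hex_deg3 i. \<Sum>v\<in>hex_deg3 i - {u}. monom 1 (nat (ladder_dist n u v))) = 2 * hex_inner_poly"
  unfolding hex_deg3_def hex_inner_poly_def ladder_dist_def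
  by (auto simp: insert_Diff_if numeral_mult_conv_smult poly_eq_iff coeff_monom)

lemma hex_cross_sum:
  assumes "i < j"
  shows "(\<Sum>u\<in>hex_deg3 i. \<Sum>v\<in>hex_deg3 j. monom 1 (nat (ladder_dist n u v))) = hex_pair_poly (j - i)"
proof -
  obtain d where j: "j = Suc (i + d)" using less_imp_Suc_add[OF assms] by blast
  then have "j - i = Suc d" by simp
  then show ?thesis
    unfolding \<open>j - i = Suc d\<close> j hex_deg3_def hex_pair_poly_def ladder_dist_def
    by (auto simp: poly_eq_iff coeff_monom numeral_mult_conv_smult nat_add_distrib nat_mult_distrib)
qed

lemma finite_hex_deg3: "finite (hex_deg3 i)"
  unfolding hex_deg3_def by simp

lemma finite_deg3_verts: "finite (deg3_verts m)"
  unfolding deg3_verts_def by (simp add: finite_hex_deg3)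

lemma deg3_cross_sum:
  "(\<Sum>u\<in>deg3_verts m. \<Sum>v\<in>hex_deg3 (Suc m). monom 1 (nat (ladder_dist n u v)))
     = (\<Sum>k=1..m. hex_pair_poly k)"
proof -
  have "(\<Sum>u\<in>deg3_verts m. \<Sum>v\<in>hex_deg3 (Suc m). monom 1 (nat (ladder_dist n u v)))
      = (\<Sum>i=1..m. \<Sum>u\<in>hex_deg3 i. \<Sum>v\<in>hex_deg3 (Suc m). monom 1 (nat (ladder_dist n u v)))"
    unfolding deg3_verts_def by (rule sum.UNION_disjoint) (auto simp: hex_deg3_def)
  also have "\<dots> = (\<Sum>i=1..m. hex_pair_poly (Suc m - i))"
    using hex_cross_sum[of _ "Suc m"] by (intro sum.cong) auto
  also have "\<dots> = (\<Sum>k=1..m. hex_pair_poly k)"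
    using sum.atLeastAtMost_rev[of hex_pair_poly 1 m] by simp
  finally show ?thesis .
qed

lemma deg3_dist_sum_Suc:
  "deg3_dist_sum n (Suc m)
     = deg3_dist_sum n m + 2 * (\<Sum>k=1..m. hex_pair_poly k) + 2 * hex_inner_poly"
proof -
  have "deg3_verts (Suc m) = deg3_verts m \<union> hex_deg3 (Suc m)"
    unfolding deg3_verts_def by (auto simp: atLeastAtMostSuc_conv)
  moreover have "deg3_verts m \<inter> hex_deg3 (Suc m) = {}"
    unfolding deg3_verts_def hex_deg3_def by auto
  ultimately show ?thesis
    unfolding deg3_dist_sum_def
    by (simp add: sum_offdiag_Un finite_deg3_verts ladder_dist_commute deg3_cross_sum
        hex_offdiag_sum finite_hex_deg3)
qed

lemma hex_pair_poly_sum: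
  assumes "m \<ge> 1"
  shows "hex_inner_poly + (\<Sum>k=1..m. hex_pair_poly k)
       = monom 4 1 + (\<Sum>k=2..m. monom 6 (3*k - 2)) + (\<Sum>k=1..m. monom 4 (3*k - 1))
         + (\<Sum>k=1..m. monom 6 (3*k)) + monom 4 (3*m + 1) + monom 2 (3*m + 2) + monom 2 (3*m + 3)"
  using assms
proof (induction m rule: dec_induct)
  case base
  show ?case
    by (simp add: hex_inner_poly_def hex_pair_poly_def poly_eq_iff coeff_monom
        numeral_mult_conv_smult)
next
  case (step m)
  have "monom 4 (3*m + 1) + monom 2 (3*m + 2) + monom 2 (3*m + 3) + hex_pair_poly (Suc m)
      = monom 6 (3*Suc m - 2) + monom 4 (3*Suc m - 1) + monom 6 (3*Suc m)
        + monom 4 (3*Suc m + 1) + monom 2 (3*Suc m + 2) + (monom 2 (3*Suc m + 3) :: int poly)"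
    by (simp add: hex_pair_poly_def poly_eq_iff coeff_monom numeral_mult_conv_smult)
  then show ?case
    using step.IH step.hyps by (simp add: sum.cl_ivl_Suc algebra_simps)
qed

lemma sum_monom_linear_Suc:
  fixes a b :: "'a::comm_ring_1"
  assumes "lo \<le> Suc m"
  shows "(\<Sum>k=lo..Suc m. monom (a * of_nat (Suc m - k) + b) (e k))
       = (\<Sum>k=lo..m. monom (a * of_nat (m - k) + b) (e k)) + (\<Sum>k=lo..m. monom a (e k))
         + monom b (e (Suc m))"
proof -
  have "(\<Sum>k=lo..m. monom (a * of_nat (Suc m - k) + b) (e k))
      = (\<Sum>k=lo..m. monom (a * of_nat (m - k) + b) (e k) + monom a (e k))"
    by (intro sum.cong) (auto simp: Suc_diff_le add_monom algebra_simps)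
  then show ?thesis
    using assms by (simp add: sum.cl_ivl_Suc sum.distrib)
qed

(* The claimed polynomial, written in terms of the number m = n - 1 of hexagons. *)
definition closed_form :: "nat \<Rightarrow> int poly" where
  "closed_form m = monom (4 * int m - 2) 1
     + (\<Sum>k=2..m. monom (6 * int (m - k) + 4) (3*k - 2))
     + (\<Sum>k=1..m. monom (4 * int (m - k) + 2) (3*k - 1))
     + (\<Sum>k=1..m. monom (6 * int (m - k) + 2) (3*k))"

lemma closed_form_Suc:
  assumes "m \<ge> 1"
  shows "closed_form (Suc m) = closed_form m + (hex_inner_poly + (\<Sum>k=1..m. hex_pair_poly k))"
proof -
  have lo: "1 \<le> Suc m" "2 \<le> Suc m" using assms by simp_all
  have "monom (4 * int (Suc m) - 2) 1 = monom (4 * int m - 2) 1 + (monom 4 1 :: int poly)"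
    by (simp add: add_monom algebra_simps)
  then have "closed_form (Suc m) = closed_form m
      + (monom 4 1 + (\<Sum>k=2..m. monom 6 (3*k - 2)) + (\<Sum>k=1..m. monom 4 (3*k - 1))
         + (\<Sum>k=1..m. monom 6 (3*k)) + monom 4 (3*m + 1) + monom 2 (3*m + 2) + monom 2 (3*m + 3))"
    unfolding closed_form_def sum_monom_linear_Suc[OF lo(1)] sum_monom_linear_Suc[OF lo(2)]
    by (simp add: ac_simps)
  then show ?thesis
    unfolding hex_pair_poly_sum[OF assms] .
qed

lemma deg3_dist_sum_eq_closed_form:
  "m \<ge> 1 \<Longrightarrow> deg3_dist_sum n m = 2 * closed_form m"
proof (induction m rule: dec_induct)
  case base
  have "deg3_verts 1 = hex_deg3 1"
    unfolding deg3_verts_def by simp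
  then show ?case
    unfolding deg3_dist_sum_def by (simp add: hex_offdiag_sum closed_form_def hex_inner_poly_def)
next
  case (step m)
  then show ?case
    by (simp add: deg3_dist_sum_Suc closed_form_Suc algebra_simps)
qed

lemma closed_form_eq:
  assumes "n \<ge> 2"
  shows "closed_form (n - 1) =
           monom (2 * (2 * int n - 3)) 1
         + (\<Sum>k=2..n-1. monom (2 * (3 * int n - 3 * int k - 1)) (3*k - 2))
         + (\<Sum>k=1..n-1. monom (2 * (2 * int n - 2 * int k - 1)) (3*k - 1))
         + (\<Sum>k=1..n-1. monom (2 * (3 * int n - 3 * int k - 2)) (3*k))"
proof -
  obtain m where n: "n = Suc m" using assms by (cases n) auto
  show ?thesis
    unfolding n closed_form_def by (simp add: algebra_simps)
qed

theorem theorem2p6: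
  fixes n :: nat
  assumes "n \<ge> 2"
  shows "base_poly (L_verts n) (L_adj n) 3 =
           monom (2 * (2 * int n - 3)) 1
         + (\<Sum>k=2..n-1. monom (2 * (3 * int n - 3 * int k - 1)) (3*k - 2))
         + (\<Sum>k=1..n-1. monom (2 * (2 * int n - 2 * int k - 1)) (3*k - 1))
         + (\<Sum>k=1..n-1. monom (2 * (3 * int n - 3 * int k - 2)) (3*k))"
proof -
  have "2 * base_poly (L_verts n) (L_adj n) 3
      = (\<Sum>u\<in>deg3_verts (n - 1). \<Sum>v\<in>deg3_verts (n - 1) - {u}.
           monom 1 (gdist (L_verts n) (L_adj n) u v))"
    using base_poly_eq_half_offdiag_sum[where V = "L_verts n" and E = "L_adj n" and p = 3]
    unfolding L_deg3_verts[OF assms] by (simp add: finite_L_verts L_adj_commute)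
  also have "\<dots> = deg3_dist_sum n (n - 1)"
    unfolding deg3_dist_sum_def using gdist_L_deg3[OF assms] deg3_verts_subset[of n]
    by (intro sum.cong) auto
  also have "\<dots> = 2 * closed_form (n - 1)"
    using assms by (intro deg3_dist_sum_eq_closed_form) simp
  finally show ?thesis
    unfolding closed_form_eq[OF assms, symmetric] by simp
qed

end
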